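(* The class of doubly ordered frames is not modally definable: there is no set of formulas of the bimodal language (with two modal operators interpreted by the two relations of a frame) whose class of validating frames $\langle X, R_1, R_2\rangle$ is exactly the class of doubly ordered frames.
   Context: A doubly ordered frame is a structure $\langle X, \leq_1, \leq_2\rangle$ where $\leq_1,\leq_2$ are quasiorders (reflexive and transitive binary relations) on $X$ such that $x \leq_1 y$ and $x \leq_2 y$ together imply $x = y$. Frames here are Kripke frames $\langle X, R_1, R_2\rangle$ with two binary relations; a class of such frames is modally definable if it is the class of all frames validating some set of formulas of the basic modal language with two modalities, the $i$-th interpreted via $R_i$. *)

theory Defs
  imports Main
begin

datatype 'v fm =
    Var 'v
  | Bot
  | Neg "'v fm"
  | Conj "'v fm" "'v fm"
  | Disj "'v fm" "'v fm"
  | Imp "'v fm" "'v fm"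
  | Box1 "'v fm"
  | Box2 "'v fm"

definition kframe :: "'w set \<Rightarrow> ('w \<Rightarrow> 'w \<Rightarrow> bool) \<Rightarrow> ('w \<Rightarrow> 'w \<Rightarrow> bool) \<Rightarrow> bool" where
  "kframe X R1 R2 \<longleftrightarrow>
     (\<forall>x y. R1 x y \<longrightarrow> x \<in> X \<and> y \<in> X) \<and> (\<forall>x y. R2 x y \<longrightarrow> x \<in> X \<and> y \<in> X)"

fun sat :: "'w set \<Rightarrow> ('w \<Rightarrow> 'w \<Rightarrow> bool) \<Rightarrow> ('w \<Rightarrow> 'w \<Rightarrow> bool) \<Rightarrow> ('v \<Rightarrow> 'w set)
            \<Rightarrow> 'w \<Rightarrow> 'v fm \<Rightarrow> bool" where
  "sat X R1 R2 V w (Var p) = (w \<in> V p)"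
| "sat X R1 R2 V w Bot = False"
| "sat X R1 R2 V w (Neg a) = (\<not> sat X R1 R2 V w a)"
| "sat X R1 R2 V w (Conj a b) = (sat X R1 R2 V w a \<and> sat X R1 R2 V w b)"
| "sat X R1 R2 V w (Disj a b) = (sat X R1 R2 V w a \<or> sat X R1 R2 V w b)"
| "sat X R1 R2 V w (Imp a b) = (sat X R1 R2 V w a \<longrightarrow> sat X R1 R2 V w b)"
| "sat X R1 R2 V w (Box1 a) = (\<forall>v\<in>X. R1 w v \<longrightarrow> sat X R1 R2 V v a)"
| "sat X R1 R2 V w (Box2 a) = (\<forall>v\<in>X. R2 w v \<longrightarrow> sat X R1 R2 V v a)"

definition valid_in :: "'w set \<Rightarrow> ('w \<Rightarrow> 'w \<Rightarrow> bool) \<Rightarrow> ('w \<Rightarrow> 'w \<Rightarrow> bool) \<Rightarrow> 'v fm \<Rightarrow> bool" where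
  "valid_in X R1 R2 \<phi> \<longleftrightarrow> (\<forall>V. \<forall>w\<in>X. sat X R1 R2 V w \<phi>)"

definition quasiorder_on :: "'w set \<Rightarrow> ('w \<Rightarrow> 'w \<Rightarrow> bool) \<Rightarrow> bool" where
  "quasiorder_on X R \<longleftrightarrow>
     (\<forall>x\<in>X. R x x) \<and> (\<forall>x\<in>X. \<forall>y\<in>X. \<forall>z\<in>X. R x y \<longrightarrow> R y z \<longrightarrow> R x z)"

definition doubly_ordered :: "'w set \<Rightarrow> ('w \<Rightarrow> 'w \<Rightarrow> bool) \<Rightarrow> ('w \<Rightarrow> 'w \<Rightarrow> bool) \<Rightarrow> bool" where
  "doubly_ordered X R1 R2 \<longleftrightarrow>
     kframe X R1 R2 \<and> quasiorder_on X R1 \<and> quasiorder_on X R2 \<and>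
     (\<forall>x\<in>X. \<forall>y\<in>X. R1 x y \<longrightarrow> R2 x y \<longrightarrow> x = y)"

end

theory Submission
  imports Defs
begin

text \<open>Validity of modal formulas is preserved under surjective bounded morphisms (p-morphisms),
so every modally definable class of frames is closed under bounded morphic images. The doubly
ordered frames are not: the product of two two-element clusters, with R1-classes {a,b}, {c,d}
and R2-classes {a,c}, {b,d}, is doubly ordered, and identifying the diagonal pairs a, d and
b, c maps it onto a two-element cluster in which both relations are universal, violating
the antisymmetry condition R1 x y \<and> R2 x y \<longrightarrow> x = y.\<close>

definition zigzag :: "('w \<Rightarrow> 'u) \<Rightarrow> 'w set \<Rightarrow> ('w \<Rightarrow> 'w \<Rightarrow> bool) \<Rightarrow> 'u set \<Rightarrow> ('u \<Rightarrow> 'u \<Rightarrow> bool) \<Rightarrow> bool"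
  where "zigzag f X R Y S \<longleftrightarrow>
    (\<forall>u\<in>X. \<forall>v\<in>X. R u v \<longrightarrow> S (f u) (f v)) \<and>
    (\<forall>u\<in>X. \<forall>v'\<in>Y. S (f u) v' \<longrightarrow> (\<exists>v\<in>X. R u v \<and> f v = v'))"

definition bounded_morphism :: "('w \<Rightarrow> 'u) \<Rightarrow> 'w set \<Rightarrow> ('w \<Rightarrow> 'w \<Rightarrow> bool) \<Rightarrow> ('w \<Rightarrow> 'w \<Rightarrow> bool)
    \<Rightarrow> 'u set \<Rightarrow> ('u \<Rightarrow> 'u \<Rightarrow> bool) \<Rightarrow> ('u \<Rightarrow> 'u \<Rightarrow> bool) \<Rightarrow> bool"
  where "bounded_morphism f X R1 R2 Y S1 S2 \<longleftrightarrow>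
    f ` X \<subseteq> Y \<and> zigzag f X R1 Y S1 \<and> zigzag f X R2 Y S2"

lemma zigzag_box_iff:
  assumes "zigzag f X R Y S" "f ` X \<subseteq> Y"
    and "\<And>u. u \<in> X \<Longrightarrow> P u \<longleftrightarrow> Q (f u)" "w \<in> X"
  shows "(\<forall>v\<in>X. R w v \<longrightarrow> P v) \<longleftrightarrow> (\<forall>v'\<in>Y. S (f w) v' \<longrightarrow> Q v')"
  using assms unfolding zigzag_def by blast

lemma sat_bounded_morphism:
  assumes "bounded_morphism f X R1 R2 Y S1 S2" "w \<in> X"
  shows "sat X R1 R2 (\<lambda>p. {u\<in>X. f u \<in> V p}) w \<phi> \<longleftrightarrow> sat Y S1 S2 V (f w) \<phi>"
  using assms(2)
proof (induction \<phi> arbitrary: w)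
  case (Box1 \<phi>)
  have "zigzag f X R1 Y S1" "f ` X \<subseteq> Y"
    using assms(1) unfolding bounded_morphism_def by auto
  then show ?case
    unfolding sat.simps using Box1 by (rule zigzag_box_iff)
next
  case (Box2 \<phi>)
  have "zigzag f X R2 Y S2" "f ` X \<subseteq> Y"
    using assms(1) unfolding bounded_morphism_def by auto
  then show ?case
    unfolding sat.simps using Box2 by (rule zigzag_box_iff)
qed auto

lemma valid_in_bounded_morphic_image:
  assumes "bounded_morphism f X R1 R2 Y S1 S2" "f ` X = Y" "valid_in X R1 R2 \<phi>"
  shows "valid_in Y S1 S2 \<phi>"
  unfolding valid_in_def
proof (intro allI ballI)
  fix V and y assume "y \<in> Y"
  then obtain x where "x \<in> X" "y = f x"
    using assms(2) by blast
  then show "sat Y S1 S2 V y \<phi>"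
    using assms(3) sat_bounded_morphism[OF assms(1)] unfolding valid_in_def by blast
qed

lemma doubly_ordered_not_closed_under_bounded_morphic_images:
  fixes a b c d :: 'w
  assumes "distinct [a, b, c, d]"
  obtains X :: "'w set" and R1 R2 and Y :: "'w set" and S and f :: "'w \<Rightarrow> 'w"
  where "doubly_ordered X R1 R2" "bounded_morphism f X R1 R2 Y S S" "f ` X = Y"
    and "kframe Y S S" "\<not> doubly_ordered Y S S"
proof -
  let ?X = "{a, b, c, d}"
  let ?R1 = "\<lambda>u v. u \<in> {a, b} \<and> v \<in> {a, b} \<or> u \<in> {c, d} \<and> v \<in> {c, d}"
  let ?R2 = "\<lambda>u v. u \<in> {a, c} \<and> v \<in> {a, c} \<or> u \<in> {b, d} \<and> v \<in> {b, d}"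
  let ?Y = "{a, b}"
  let ?S = "\<lambda>u v. u \<in> {a, b} \<and> v \<in> {a, b}"
  let ?f = "\<lambda>u. if u = a \<or> u = d then a else b"
  have "doubly_ordered ?X ?R1 ?R2"
    using assms unfolding doubly_ordered_def kframe_def quasiorder_on_def by auto
  moreover have "bounded_morphism ?f ?X ?R1 ?R2 ?Y ?S ?S"
    using assms unfolding bounded_morphism_def zigzag_def by auto
  moreover have "?f ` ?X = ?Y"
    using assms by auto
  moreover have "kframe ?Y ?S ?S"
    unfolding kframe_def by auto
  moreover have "\<not> doubly_ordered ?Y ?S ?S"
    using assms unfolding doubly_ordered_def by auto
  ultimately show thesis
    by (rule that)
qed

lemma infinite_UNIV_obtain_distinct4:
  assumes "infinite (UNIV :: 'a set)"
  obtains a b c d :: 'a where "distinct [a, b, c, d]"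
proof -
  have fresh: "\<exists>x. x \<notin> A" if "finite A" for A :: "'a set"
    using ex_new_if_finite[OF assms that] .
  obtain a :: 'a where "a \<notin> {}"
    using fresh[of "{}"] by auto
  obtain b where "b \<notin> {a}"
    using fresh[of "{a}"] by auto
  moreover obtain c where "c \<notin> {a, b}"
    using fresh[of "{a, b}"] by auto
  moreover obtain d where "d \<notin> {a, b, c}"
    using fresh[of "{a, b, c}"] by auto
  ultimately have "distinct [a, b, c, d]"
    by auto
  then show thesis
    by (rule that)
qed

theorem mainTheorem2:
  assumes "infinite (UNIV :: 'w set)"
  shows "\<not> (\<exists>\<Phi> :: 'v fm set. \<forall>(X :: 'w set) R1 R2. kframe X R1 R2 \<longrightarrow>
            ((\<forall>\<phi>\<in>\<Phi>. valid_in X R1 R2 \<phi>) \<longleftrightarrow> doubly_ordered X R1 R2))"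
proof
  assume "\<exists>\<Phi> :: 'v fm set. \<forall>(X :: 'w set) R1 R2. kframe X R1 R2 \<longrightarrow>
            ((\<forall>\<phi>\<in>\<Phi>. valid_in X R1 R2 \<phi>) \<longleftrightarrow> doubly_ordered X R1 R2)"
  then obtain \<Phi> :: "'v fm set" where definable: "\<And>(X :: 'w set) R1 R2. kframe X R1 R2 \<Longrightarrow>
      (\<forall>\<phi>\<in>\<Phi>. valid_in X R1 R2 \<phi>) \<longleftrightarrow> doubly_ordered X R1 R2"
    by blast
  obtain a b c d :: 'w where "distinct [a, b, c, d]"
    using infinite_UNIV_obtain_distinct4[OF assms] .
  then obtain X :: "'w set" and R1 R2 and Y :: "'w set" and S and f :: "'w \<Rightarrow> 'w"
    where F: "doubly_ordered X R1 R2" and f: "bounded_morphism f X R1 R2 Y S S" "f ` X = Y"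
      and G: "kframe Y S S" "\<not> doubly_ordered Y S S"
    by (rule doubly_ordered_not_closed_under_bounded_morphic_images)
  have "\<forall>\<phi>\<in>\<Phi>. valid_in X R1 R2 \<phi>"
    using F definable unfolding doubly_ordered_def by blast
  then have "\<forall>\<phi>\<in>\<Phi>. valid_in Y S S \<phi>"
    using valid_in_bounded_morphic_image[OF f] by blast
  with G definable show False
    by blast
qed

end
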